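(* For every infinite cardinal $\kappa \le 2^{\aleph_0}$ there exist disjoint sets $A, B\subseteq \mathbb{R}$ with $|A|=|B|=\kappa$ such that $A$ and $B$ are both homogeneous and everywhere isomorphic. In particular, for every infinite cardinal $\kappa\le 2^{\aleph_0}$ there is a homogeneous suborder of $\mathbb{R}$ of cardinality $\kappa$.
   Context: A suborder $X\subseteq\mathbb{R}$ is homogeneous if $X\cong X\cap I$ (order-isomorphism) for every open interval $I=(a,b)$ with $-\infty\le a<b\le\infty$. Disjoint $A,B\subseteq\mathbb{R}$ are everywhere isomorphic if $A\cap I\cong B\cap I$ for every such open interval $I$. *)

theory Defs
  imports Complex_Main "HOL-Library.Extended_Real" "HOL-Library.Equipollence"
begin

definition oint :: "ereal \<Rightarrow> ereal \<Rightarrow> real set" where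
  "oint a b = {x::real. a < ereal x \<and> ereal x < b}"

definition order_iso :: "real set \<Rightarrow> real set \<Rightarrow> bool" where
  "order_iso X Y \<longleftrightarrow> (\<exists>f. bij_betw f X Y \<and> (\<forall>x\<in>X. \<forall>y\<in>X. x < y \<longrightarrow> f x < f y))"

definition homogeneous :: "real set \<Rightarrow> bool" where
  "homogeneous X \<longleftrightarrow> (\<forall>a b. a < b \<longrightarrow> order_iso X (X \<inter> oint a b))"

definition everywhere_iso :: "real set \<Rightarrow> real set \<Rightarrow> bool" where
  "everywhere_iso A B \<longleftrightarrow> A \<inter> B = {} \<and>
     (\<forall>a b. a < b \<longrightarrow> order_iso (A \<inter> oint a b) (B \<inter> oint a b))"

end

theory Submission
  imports Defs "HOL-Analysis.Continuum_Not_Denumerable" "HOL-Library.Countable_Set"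
begin

text \<open>
  Choose a Hamel basis of \<open>\<real>\<close> over \<open>\<rat>\<close> containing \<open>1\<close> and an irrational \<open>\<beta>\<close>, and let \<open>W\<close>
  be the \<open>\<rat>\<close>-span of the remaining basis vectors; then \<open>\<real> = W \<oplus> \<rat>\<beta>\<close>, so \<open>W\<close> has the
  cardinality of the continuum. Embed \<open>K\<close> into \<open>W\<close> and let \<open>A\<close> be the closure of the image under
  all maps \<open>x \<mapsto> r x + q\<close> with \<open>r, q\<close> rational, \<open>r \<noteq> 0\<close>. Then \<open>|A| = |K|\<close>, \<open>A \<subseteq> W\<close>, and
  \<open>B = A + \<beta>\<close> is disjoint from \<open>A\<close>.

  A set closed under these rational affine maps is homogeneous: for an interval \<open>I\<close> pick a
  strictly increasing \<open>\<int>\<close>-indexed sequence of rationals in \<open>I\<close> that is cofinal at both ends;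
  the piecewise linear map sending each integer \<open>n\<close> to the \<open>n\<close>-th term is an increasing
  bijection \<open>\<real> \<rightarrow> I\<close> that is rational affine on every piece, hence maps \<open>A\<close> onto \<open>A \<inter> I\<close>.
  The translate \<open>B\<close> is homogeneous too, and \<open>A \<inter> I \<cong> A \<cong> B \<cong> B \<inter> I\<close>.
\<close>

section \<open>Order isomorphisms of suborders of the reals\<close>

lemma order_iso_iff_image: "order_iso X Y \<longleftrightarrow> (\<exists>f. strict_mono_on X f \<and> f ` X = Y)"
  unfolding order_iso_def strict_mono_on_def bij_betw_def
  using strict_mono_on_imp_inj_on[unfolded strict_mono_on_def] by blast

lemma order_iso_image: "strict_mono_on X f \<Longrightarrow> order_iso X (f ` X)"
  using order_iso_iff_image by blast

lemma order_iso_trans: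
  assumes "order_iso X Y" "order_iso Y Z" shows "order_iso X Z"
proof -
  obtain f g where "strict_mono_on X f" "f ` X = Y" "strict_mono_on Y g" "g ` Y = Z"
    using assms unfolding order_iso_iff_image by blast
  then have "strict_mono_on X (g \<circ> f)" "(g \<circ> f) ` X = Z"
    by (auto simp: strict_mono_on_def image_comp)
  then show ?thesis unfolding order_iso_iff_image by blast
qed

lemma order_iso_sym:
  assumes "order_iso X Y" shows "order_iso Y X"
proof -
  obtain f where f: "strict_mono_on X f" "f ` X = Y"
    using assms unfolding order_iso_iff_image by blast
  have inj: "inj_on f X" using f(1) by (rule strict_mono_on_imp_inj_on)
  have "strict_mono_on Y (inv_into X f)"
  proof (rule strict_mono_onI)
    fix u v assume "u \<in> Y" "v \<in> Y" "u < v"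
    then obtain x y where "x \<in> X" "y \<in> X" "u = f x" "v = f y" "f x < f y"
      using f(2) by auto
    moreover have "\<not> y \<le> x"
      using f(1) \<open>f x < f y\<close> \<open>x \<in> X\<close> \<open>y \<in> X\<close> strict_mono_on_leD by fastforce
    ultimately show "inv_into X f u < inv_into X f v" by (simp add: inv_into_f_f inj)
  qed
  moreover have "inv_into X f ` Y = X"
    using bij_betw_inv_into[of f X Y] inj f(2) by (simp add: bij_betw_def)
  ultimately show ?thesis unfolding order_iso_iff_image by blast
qed

lemma order_iso_inter_range:
  assumes "strict_mono f" "\<And>x. f x \<in> X \<longleftrightarrow> x \<in> X"
  shows "order_iso X (X \<inter> range f)"
proof -
  have "f ` X = X \<inter> range f" using assms(2) by auto
  moreover have "strict_mono_on X f" using monotone_on_subset[OF assms(1) subset_UNIV] .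
  ultimately show ?thesis by (metis order_iso_image)
qed

lemma translate_inter_oint:
  "(\<lambda>x. x + c) ` X \<inter> oint a b = (\<lambda>x. x + c) ` (X \<inter> oint (a - ereal c) (b - ereal c))"
proof -
  have "a < ereal (x + c) \<longleftrightarrow> a - ereal c < ereal x" "ereal (x + c) < b \<longleftrightarrow> ereal x < b - ereal c"
    for x by (cases a; cases b; auto)+
  then show ?thesis unfolding oint_def by auto
qed

lemma homogeneous_translate:
  assumes "homogeneous X" shows "homogeneous ((\<lambda>x. x + c) ` X)"
  unfolding homogeneous_def
proof (intro allI impI)
  fix a b :: ereal assume "a < b"
  then have "a - ereal c < b - ereal c" by (cases a; cases b) auto
  then have "order_iso X (X \<inter> oint (a - ereal c) (b - ereal c))"
    using assms unfolding homogeneous_def by blast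
  moreover have "order_iso Y ((\<lambda>x. x + c) ` Y)" for Y :: "real set"
    by (rule order_iso_image) (simp add: strict_mono_onI)
  ultimately show "order_iso ((\<lambda>x. x + c) ` X) ((\<lambda>x. x + c) ` X \<inter> oint a b)"
    unfolding translate_inter_oint by (meson order_iso_sym order_iso_trans)
qed

lemma everywhere_iso_if_homogeneous:
  assumes "A \<inter> B = {}" "homogeneous A" "homogeneous B" "order_iso A B"
  shows "everywhere_iso A B"
  unfolding everywhere_iso_def
proof (intro conjI allI impI)
  fix a b :: ereal assume "a < b"
  then have "order_iso (A \<inter> oint a b) A" "order_iso B (B \<inter> oint a b)"
    using assms(2,3) order_iso_sym unfolding homogeneous_def by blast+
  then show "order_iso (A \<inter> oint a b) (B \<inter> oint a b)"
    using assms(4) order_iso_trans by blast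
qed (rule assms(1))

section \<open>Cofinal sequences of rationals in an interval\<close>

lemma strict_mono_int_step:
  fixes f :: "int \<Rightarrow> 'a::order"
  assumes step: "\<And>i. f i < f (i + 1)"
  shows "strict_mono f"
proof
  fix i j :: int assume "i < j"
  then show "f i < f j"
  proof (induction j rule: int_gr_induct)
    case base then show ?case by (rule step)
  next
    case (step j) then show ?case using assms less_trans by blast
  qed
qed

lemma exists_int_bracket:
  fixes f :: "int \<Rightarrow> 'a::linorder"
  assumes "f lo \<le> y" "y < f hi" "lo \<le> hi"
  shows "\<exists>i. f i \<le> y \<and> y < f (i + 1)"
  using \<open>lo \<le> hi\<close> \<open>y < f hi\<close>
proof (induction hi rule: int_ge_induct)
  case base then show ?case using assms(1) by simp
next
  case (step i) then show ?case by (cases "f i \<le> y") auto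
qed

lemma exists_cofinal_strict_seq:
  fixes b :: ereal
  assumes "ereal m < b"
  obtains h :: "nat \<Rightarrow> real"
  where "h 0 = m" "strict_mono h" "\<And>n. h n < b" "\<And>y. ereal y < b \<Longrightarrow> \<exists>n. y < h n"
proof (cases b)
  case (real b')
  define h where "h n = b' - (b' - m) / (real n + 1)" for n
  have "m < b'" using assms real by simp
  have "(b' - m) / (real n + 2) < (b' - m) / (real n + 1)" for n
    using \<open>m < b'\<close> by (intro divide_strict_left_mono) auto
  then have "strict_mono h" unfolding strict_mono_Suc_iff h_def by (simp add: add.commute)
  moreover have "\<exists>n. y < h n" if "ereal y < b" for y
  proof -
    have "y < b'" using that real by simp
    obtain n where "(b' - m) / (b' - y) < real n" using reals_Archimedean2 by blast
    then have "(b' - m) / (real n + 1) < b' - y"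
      using \<open>y < b'\<close> by (simp add: field_simps)
    then show ?thesis unfolding h_def by (intro exI[of _ n]) linarith
  qed
  ultimately show ?thesis using that[of h] \<open>m < b'\<close> real by (simp add: h_def)
next
  case PInf
  have "\<exists>n. y < m + real n" for y
    using reals_Archimedean2[of "y - m"] by (metis add.commute diff_less_eq)
  then show ?thesis using that[of "\<lambda>n. m + real n"] PInf by (simp add: strict_mono_def)
qed (use assms in simp)

lemma exists_cofinal_int_seq:
  fixes a b :: ereal
  assumes "a < b"
  obtains p :: "int \<Rightarrow> real"
  where "\<And>i. p i < p (i + 1)" "\<And>i. p i \<in> oint a b" "\<And>y. y \<in> oint a b \<Longrightarrow> \<exists>i j. p i < y \<and> y < p j"
proof -
  obtain m where m: "a < ereal m" "ereal m < b" using ereal_dense2[OF assms] by blast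
  then have "ereal (- m) < - a" by (cases a) auto
  obtain h :: "nat \<Rightarrow> real" where h: "h 0 = m" "strict_mono h" "\<And>n. h n < b"
    "\<And>y. ereal y < b \<Longrightarrow> \<exists>n. y < h n"
    using exists_cofinal_strict_seq[OF m(2)] by blast
  obtain g :: "nat \<Rightarrow> real" where g: "g 0 = - m" "strict_mono g" "\<And>n. g n < - a"
    "\<And>y. ereal y < - a \<Longrightarrow> \<exists>n. y < g n"
    using exists_cofinal_strict_seq[OF \<open>ereal (- m) < - a\<close>] by blast
  define p where "p i = (if 0 \<le> i then h (nat i) else - g (nat (- i)))" for i
  have "p i < p (i + 1)" for i
  proof -
    consider "0 \<le> i" | "i = -1" | "i < -1" by linarith
    then show ?thesis
    proof cases
      case 1
      then have "nat (i + 1) = Suc (nat i)" by simp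
      then show ?thesis using 1 h(2) unfolding p_def by (simp add: strict_mono_Suc_iff)
    next
      case 2
      have "g 0 < g 1" using g(2) by (simp add: strict_mono_def)
      then show ?thesis using 2 g(1) h(1) unfolding p_def by simp
    next
      case 3
      then have "nat (- i) = Suc (nat (- (i + 1)))" by simp
      then show ?thesis using 3 g(2) unfolding p_def by (simp add: strict_mono_Suc_iff)
    qed
  qed
  moreover have "p i \<in> oint a b" for i
  proof -
    have "ereal m \<le> ereal (h n)" "ereal (- g n) \<le> ereal m" for n
      using h(1,2) g(1,2) strict_mono_less_eq[of h 0 n] strict_mono_less_eq[of g 0 n] by auto
    moreover have "a < ereal (- g n)" for n using g(3)[of n] by (cases a) auto
    ultimately show ?thesis
      using m h(3) unfolding p_def oint_def
      by (auto intro: order.strict_trans2[OF m(1)] order.strict_trans1[OF _ m(2)])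
  qed
  moreover have "\<exists>i j. p i < y \<and> y < p j" if y: "y \<in> oint a b" for y
  proof -
    obtain n where n: "y < h n" using h(4) y unfolding oint_def by blast
    have "ereal (- y) < - a" using y unfolding oint_def by (cases a) auto
    then obtain n' where "- y < g n'" using g(4) by blast
    moreover have "g n' < g (Suc n')" using g(2) by (simp add: strict_mono_Suc_iff)
    ultimately have "- g (Suc n') < y" by linarith
    with n have "p (- int (Suc n')) < y" "y < p (int n)"
      unfolding p_def by (simp_all add: nat_add_distrib)
    then show ?thesis by blast
  qed
  ultimately show ?thesis using that by blast
qed

lemma oint_between:
  assumes "u \<in> oint a b" "v \<in> oint a b" "u \<le> y" "y \<le> v"
  shows "y \<in> oint a b"
  using assms unfolding oint_def mem_Collect_eq
  by (metis ereal_less_eq(3) order.strict_trans1 order.strict_trans2)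

lemma exists_rat_knots:
  fixes a b :: ereal
  assumes "a < b"
  obtains C :: "int \<Rightarrow> real"
  where "\<And>i. C i \<in> \<rat>" "\<And>i. C i < C (i + 1)" "\<And>i. C i \<in> oint a b"
    "\<And>y. y \<in> oint a b \<Longrightarrow> \<exists>i. C i \<le> y \<and> y < C (i + 1)"
proof -
  obtain p :: "int \<Rightarrow> real" where p: "\<And>i. p i < p (i + 1)" "\<And>i. p i \<in> oint a b"
    "\<And>y. y \<in> oint a b \<Longrightarrow> \<exists>i j. p i < y \<and> y < p j"
    using exists_cofinal_int_seq[OF assms] by blast
  define C where "C i = (SOME q. q \<in> \<rat> \<and> p i < q \<and> q < p (i + 1))" for i
  have C: "C i \<in> \<rat> \<and> p i < C i \<and> C i < p (i + 1)" for i
    unfolding C_def by (rule someI_ex) (use Rats_dense_in_real[OF p(1)] in blast)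
  have "C i < C (i + 1)" for i using C[of i] C[of "i + 1"] by linarith
  moreover have "C i \<in> oint a b" for i
    using C[of i] by (intro oint_between[OF p(2)[of i] p(2)[of "i + 1"]]) auto
  moreover have "\<exists>i. C i \<le> y \<and> y < C (i + 1)" if y: "y \<in> oint a b" for y
  proof -
    obtain i j where ij: "p i < y" "y < p j" using p(3)[OF y] by blast
    then have "i < j" using strict_mono_less[OF strict_mono_int_step[of p, OF p(1)]] by fastforce
    show ?thesis
      using ij C[of "i - 1"] C[of j] \<open>i < j\<close>
      by (intro exists_int_bracket[of C "i - 1" y j]) auto
  qed
  ultimately show ?thesis using that C by blast
qed

section \<open>Sets closed under rational affine maps are homogeneous\<close>

definition rat_affine_closed :: "real set \<Rightarrow> bool" where
  "rat_affine_closed X \<longleftrightarrow> (\<forall>x\<in>X. \<forall>r\<in>\<rat>. \<forall>q\<in>\<rat>. r \<noteq> 0 \<longrightarrow> r * x + q \<in> X)"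

lemma rat_affine_closed_mem_iff:
  assumes "rat_affine_closed X" "r \<in> \<rat>" "q \<in> \<rat>" "r \<noteq> 0"
  shows "r * x + q \<in> X \<longleftrightarrow> x \<in> X"
proof
  assume "r * x + q \<in> X"
  moreover have "inverse r \<in> \<rat>" "- q / r \<in> \<rat>" "inverse r \<noteq> 0" using assms by simp_all
  ultimately have "inverse r * (r * x + q) + (- q / r) \<in> X"
    using assms(1) unfolding rat_affine_closed_def by blast
  then show "x \<in> X" using \<open>r \<noteq> 0\<close> by (simp add: field_simps)
qed (use assms in \<open>simp add: rat_affine_closed_def\<close>)

definition piecewise_linear :: "(int \<Rightarrow> real) \<Rightarrow> real \<Rightarrow> real" where
  "piecewise_linear C x = C \<lfloor>x\<rfloor> + frac x * (C (\<lfloor>x\<rfloor> + 1) - C \<lfloor>x\<rfloor>)"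

context
  fixes C :: "int \<Rightarrow> real"
  assumes step: "\<And>i. C i < C (i + 1)"
begin

lemma piecewise_linear_bounds:
  "C \<lfloor>x\<rfloor> \<le> piecewise_linear C x \<and> piecewise_linear C x < C (\<lfloor>x\<rfloor> + 1)"
proof -
  define d where "d = C (\<lfloor>x\<rfloor> + 1) - C \<lfloor>x\<rfloor>"
  have "0 < d" using step[of "\<lfloor>x\<rfloor>"] unfolding d_def by simp
  then have "0 \<le> frac x * d" "frac x * d < d"
    using frac_ge_0[of x] frac_lt_1[of x] by simp_all
  then show ?thesis unfolding piecewise_linear_def d_def[symmetric] by (simp add: d_def)
qed

lemma strict_mono_piecewise_linear: "strict_mono (piecewise_linear C)"
proof
  fix x y :: real assume "x < y"
  show "piecewise_linear C x < piecewise_linear C y"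
  proof (cases "\<lfloor>x\<rfloor> = \<lfloor>y\<rfloor>")
    case True
    then have "frac x < frac y" using \<open>x < y\<close> by (simp add: frac_def)
    then show ?thesis
      using True step[of "\<lfloor>x\<rfloor>"] unfolding piecewise_linear_def by simp
  next
    case False
    then have "\<lfloor>x\<rfloor> + 1 \<le> \<lfloor>y\<rfloor>" using floor_mono[of x y] \<open>x < y\<close> by linarith
    then have "C (\<lfloor>x\<rfloor> + 1) \<le> C \<lfloor>y\<rfloor>"
      using strict_mono_less_eq[OF strict_mono_int_step[of C, OF step]] by blast
    then show ?thesis using piecewise_linear_bounds[of x] piecewise_linear_bounds[of y] by linarith
  qed
qed

lemma piecewise_linear_surj:
  assumes "C i \<le> y" "y < C (i + 1)"
  shows "y \<in> range (piecewise_linear C)"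
proof -
  define s where "s = (y - C i) / (C (i + 1) - C i)"
  have "0 \<le> s" "s < 1" using assms step[of i] unfolding s_def by (simp_all add: divide_less_eq)
  then have "\<lfloor>of_int i + s\<rfloor> = i" "frac (of_int i + s) = s" by (simp_all add: floor_unique frac_def)
  then have "piecewise_linear C (of_int i + s) = y"
    unfolding piecewise_linear_def s_def using step[of i] by simp
  then show ?thesis by (metis rangeI)
qed

lemma piecewise_linear_mem_iff:
  assumes "rat_affine_closed X" "\<And>i. C i \<in> \<rat>"
  shows "piecewise_linear C x \<in> X \<longleftrightarrow> x \<in> X"
proof -
  define n where "n = \<lfloor>x\<rfloor>"
  define d where "d = C (n + 1) - C n"
  have "piecewise_linear C x = d * x + (C n - of_int n * d)"
    unfolding piecewise_linear_def frac_def d_def n_def by (simp add: algebra_simps)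
  moreover have "d \<in> \<rat>" "C n - of_int n * d \<in> \<rat>" "d \<noteq> 0"
    using assms(2) step[of n] unfolding d_def by auto
  ultimately show ?thesis using rat_affine_closed_mem_iff[OF assms(1)] by simp
qed

end

lemma rat_affine_closed_homogeneous:
  assumes "rat_affine_closed X" shows "homogeneous X"
  unfolding homogeneous_def
proof (intro allI impI)
  fix a b :: ereal assume "a < b"
  then obtain C :: "int \<Rightarrow> real" where C: "\<And>i. C i \<in> \<rat>" "\<And>i. C i < C (i + 1)" "\<And>i. C i \<in> oint a b"
    "\<And>y. y \<in> oint a b \<Longrightarrow> \<exists>i. C i \<le> y \<and> y < C (i + 1)"
    using exists_rat_knots by blast
  have "range (piecewise_linear C) = oint a b"
  proof
    show "range (piecewise_linear C) \<subseteq> oint a b"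
      using piecewise_linear_bounds[of C, OF C(2)] C(3) by (auto intro: oint_between less_imp_le)
    show "oint a b \<subseteq> range (piecewise_linear C)"
      using C(4) piecewise_linear_surj[of C, OF C(2)] by blast
  qed
  then show "order_iso X (X \<inter> oint a b)"
    using order_iso_inter_range strict_mono_piecewise_linear[of C, OF C(2)]
      piecewise_linear_mem_iff[of C, OF C(2) assms C(1)] by metis
qed

definition rat_affine_hull :: "real set \<Rightarrow> real set" where
  "rat_affine_hull T = {r * t + q | r q t. r \<in> \<rat> \<and> q \<in> \<rat> \<and> r \<noteq> 0 \<and> t \<in> T}"

lemma rat_affine_closed_hull: "rat_affine_closed (rat_affine_hull T)"
  unfolding rat_affine_closed_def rat_affine_hull_def
proof (clarify)
  fix r q r' q' t :: real assume "r \<in> \<rat>" "q \<in> \<rat>" "r \<noteq> 0" "r' \<in> \<rat>" "q' \<in> \<rat>" "r' \<noteq> 0" "t \<in> T"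
  then show "\<exists>r'' q'' t'. r * (r' * t + q') + q = r'' * t' + q''
      \<and> r'' \<in> \<rat> \<and> q'' \<in> \<rat> \<and> r'' \<noteq> 0 \<and> t' \<in> T"
    by (intro exI[of _ "r * r'"] exI[of _ "r * q' + q"] exI[of _ t]) (simp add: algebra_simps)
qed

lemma times_countable_lepoll:
  assumes "infinite T" "countable S" shows "T \<times> S \<lesssim> T"
proof -
  obtain f :: "_ \<Rightarrow> nat" where "inj_on f S" using assms(2) unfolding countable_def by blast
  then have "S \<lesssim> (UNIV :: nat set)" unfolding lepoll_def by blast
  also have "(UNIV :: nat set) \<lesssim> T" using assms(1) infinite_le_lepoll by blast
  finally have "T \<times> S \<lesssim> T \<times> T" by (simp add: times_lepoll_mono)
  also have "T \<times> T \<approx> T"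
    using assms(1) by (simp add: eqpoll_iff_card_of_ordIso card_of_Times_same_infinite)
  finally show ?thesis .
qed

lemma rat_affine_hull_eqpoll:
  assumes "infinite T" shows "rat_affine_hull T \<approx> T"
proof (rule lepoll_antisym)
  have "rat_affine_hull T \<subseteq> (\<lambda>(t, r, q). r * t + q) ` (T \<times> \<rat> \<times> \<rat>)"
    unfolding rat_affine_hull_def by (auto intro!: image_eqI[where x = "(t, r, q)" for t r q])
  then have "rat_affine_hull T \<lesssim> T \<times> (\<rat> :: real set) \<times> (\<rat> :: real set)"
    by (rule subset_image_lepoll)
  also have "T \<times> (\<rat> :: real set) \<times> (\<rat> :: real set) \<lesssim> T"
    using assms countable_rat by (intro times_countable_lepoll) auto
  finally show "rat_affine_hull T \<lesssim> T" .
  have "T \<subseteq> rat_affine_hull T"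
    unfolding rat_affine_hull_def by (force intro: exI[of _ 1] exI[of _ 0])
  then show "T \<lesssim> rat_affine_hull T" by (rule subset_imp_lepoll)
qed

section \<open>A rational hyperplane of the reals\<close>

interpretation rat_vs: vector_space "\<lambda>q::rat. \<lambda>x::real. of_rat q * x"
  by unfold_locales (simp_all add: algebra_simps of_rat_add of_rat_mult)

lemma rat_affine_hull_subset_subspace:
  assumes "rat_vs.subspace W" "1 \<in> W" "T \<subseteq> W"
  shows "rat_affine_hull T \<subseteq> W"
proof
  fix x assume "x \<in> rat_affine_hull T"
  then obtain r q t where x: "x = of_rat r * t + of_rat q" "t \<in> T"
    unfolding rat_affine_hull_def Rats_def by blast
  have "of_rat r * t \<in> W" "of_rat q * 1 \<in> W"
    using assms x(2) rat_vs.subspace_scale by blast+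
  then show "x \<in> W" using rat_vs.subspace_add[OF assms(1)] x(1) by simp
qed

lemma exists_rat_hyperplane:
  obtains W :: "real set" and \<beta> :: real
  where "rat_vs.subspace W" "1 \<in> W" "\<beta> \<notin> W" "\<And>x. \<exists>k. x - of_rat k * \<beta> \<in> W"
proof -
  have "\<not> (UNIV :: real set) \<subseteq> \<rat>"
    using uncountable_UNIV_real countable_rat countable_subset by blast
  then obtain \<beta> :: real where \<beta>: "\<beta> \<notin> \<rat>" by blast
  have "1 \<notin> rat_vs.span {\<beta>}"
  proof
    assume "1 \<in> rat_vs.span {\<beta>}"
    then obtain k where "1 = of_rat k * \<beta>" unfolding rat_vs.span_singleton by blast
    then have "\<beta> = of_rat (inverse k)" by (metis inverse_unique of_rat_inverse)
    then show False using \<beta> by simp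
  qed
  moreover have "\<beta> \<noteq> 0" using \<beta> by auto
  then have "rat_vs.independent {\<beta>}" by simp
  ultimately have "rat_vs.independent {1, \<beta>}" by (rule rat_vs.independent_insertI)
  then obtain B where B: "{1, \<beta>} \<subseteq> B" "rat_vs.independent B" "UNIV \<subseteq> rat_vs.span B"
    by (rule rat_vs.maximal_independent_subset_extend[OF subset_UNIV])
  define W where "W = rat_vs.span (B - {\<beta>})"
  have "rat_vs.subspace W" unfolding W_def by simp
  moreover have "1 \<in> W"
    using B(1) \<beta> unfolding W_def by (intro rat_vs.span_base) auto
  moreover have "\<beta> \<notin> W"
    using B(1,2) unfolding W_def rat_vs.dependent_def by blast
  moreover have "\<beta> \<in> B" using B(1) by blast
  then have "x \<in> rat_vs.span (insert \<beta> (B - {\<beta>}))" for x using B(3) by (auto simp: insert_absorb)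
  then have "\<exists>k. x - of_rat k * \<beta> \<in> W" for x
    unfolding W_def by (simp only: rat_vs.span_insert) blast
  ultimately show ?thesis by (rule that)
qed

lemma real_lepoll_hyperplane:
  assumes "rat_vs.subspace W" "1 \<in> W" "\<And>x. \<exists>k. x - of_rat k * \<beta> \<in> W"
  shows "(UNIV :: real set) \<lesssim> W"
proof -
  have "\<rat> \<subseteq> W"
    using rat_vs.subspace_scale[OF assms(1,2)] unfolding Rats_def by auto
  then have "infinite W" using Rats_infinite finite_subset by blast
  have "(UNIV :: real set) \<subseteq> (\<lambda>(w, k). w + of_rat k * \<beta>) ` (W \<times> UNIV)"
  proof
    fix x :: real
    obtain k where "x - of_rat k * \<beta> \<in> W" using assms(3) by blast
    then show "x \<in> (\<lambda>(w, k). w + of_rat k * \<beta>) ` (W \<times> UNIV)"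
      by (intro image_eqI[of _ _ "(x - of_rat k * \<beta>, k)"]) auto
  qed
  then have "(UNIV :: real set) \<lesssim> W \<times> (UNIV :: rat set)" by (rule subset_image_lepoll)
  also have "W \<times> (UNIV :: rat set) \<lesssim> W" using \<open>infinite W\<close> by (intro times_countable_lepoll) auto
  finally show ?thesis .
qed

theorem mainTheorem10:
  fixes K :: "real set"
  assumes "infinite K"
  shows "(\<exists>A B :: real set. A \<inter> B = {} \<and> A \<approx> K \<and> B \<approx> K \<and>
            homogeneous A \<and> homogeneous B \<and> everywhere_iso A B)
         \<and> (\<exists>X :: real set. X \<approx> K \<and> homogeneous X)"
proof -
  obtain W :: "real set" and \<beta> where W: "rat_vs.subspace W" "1 \<in> W" "\<beta> \<notin> W"
    "\<And>x. \<exists>k. x - of_rat k * \<beta> \<in> W"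
    using exists_rat_hyperplane by blast
  have "K \<lesssim> W"
    using subset_imp_lepoll[OF subset_UNIV] real_lepoll_hyperplane[OF W(1,2,4)]
    by (rule lepoll_trans)
  then obtain f where f: "inj_on f K" "f ` K \<subseteq> W" unfolding lepoll_def by blast
  define A where "A = rat_affine_hull (f ` K)"
  define B where "B = (\<lambda>x. x + \<beta>) ` A"
  have "f ` K \<approx> K" using f(1) by (rule inj_on_image_eqpoll_self)
  moreover have "infinite (f ` K)" using f(1) assms finite_imageD by blast
  ultimately have AK: "A \<approx> K" unfolding A_def using rat_affine_hull_eqpoll eqpoll_trans by blast
  have "inj_on (\<lambda>x. x + \<beta>) A" by (simp add: inj_on_def)
  then have BK: "B \<approx> K" unfolding B_def using inj_on_image_eqpoll_self AK eqpoll_trans by blast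
  have hA: "homogeneous A"
    unfolding A_def by (rule rat_affine_closed_homogeneous[OF rat_affine_closed_hull])
  have hB: "homogeneous B" unfolding B_def by (rule homogeneous_translate[OF hA])
  have "A \<subseteq> W" unfolding A_def using rat_affine_hull_subset_subspace[OF W(1,2) f(2)] .
  then have disj: "A \<inter> B = {}"
    using W(3) rat_vs.subspace_diff[OF W(1)] unfolding B_def by fastforce
  have "order_iso A B" unfolding B_def by (rule order_iso_image) (simp add: strict_mono_onI)
  then have "everywhere_iso A B" using disj hA hB by (intro everywhere_iso_if_homogeneous)
  then show ?thesis using disj AK BK hA hB by blast
qed

end
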